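(* For all $\epsilon>0$ and $k\in\mathbb{N}$, let $d=d(\epsilon)=40\epsilon^{-2}$ and $N=N(\epsilon,k)=32k\epsilon^{-2}$. Let $D$ be a digraph on at least $N$ vertices. Then there is a $(k,d)$-connected subset $A\subseteq V(D)$ with $|A|\geq\delta^+(D)-\epsilon|D|$.
   Context: Digraphs are finite, without loops and without multiple edges (an edge may appear in both directions). A path is a sequence of distinct vertices $x_1,\dots,x_t$ with each $x_ix_{i+1}$ a directed edge; its length is its number of edges. For an uncoloured digraph $D$, a set $A\subseteq V(D)$ is $(k,d)$-connected in $D$ if for every $S\subseteq V(D)$ with $|S|\leq k-1$ and all $x,y\in A\setminus S$ there is a path from $x$ to $y$ in $D$ of length at most $d$ containing no vertex of $S$. $\delta^+(D)$ is the minimum out-degree and $|D|$ the number of vertices. *)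

theory Defs
  imports Complex_Main
begin

definition digraph :: "'a set \<Rightarrow> ('a \<times> 'a) set \<Rightarrow> bool" where
  "digraph V E \<longleftrightarrow> finite V \<and> E \<subseteq> V \<times> V \<and> (\<forall>x. (x, x) \<notin> E)"

text \<open>A path: a nonempty list of distinct vertices, consecutive ones joined by directed edges.
  Its length is the number of edges, i.e. length of the list minus one.\<close>
definition is_path :: "('a \<times> 'a) set \<Rightarrow> 'a list \<Rightarrow> bool" where
  "is_path E xs \<longleftrightarrow> xs \<noteq> [] \<and> distinct xs \<and>
     (\<forall>i. i + 1 < length xs \<longrightarrow> (xs ! i, xs ! (i + 1)) \<in> E)"

definition kd_connected :: "'a set \<Rightarrow> ('a \<times> 'a) set \<Rightarrow> nat \<Rightarrow> real \<Rightarrow> 'a set \<Rightarrow> bool" where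
  "kd_connected V E k d A \<longleftrightarrow>
     (\<forall>S. S \<subseteq> V \<longrightarrow> card S + 1 \<le> k \<longrightarrow>
        (\<forall>x \<in> A - S. \<forall>y \<in> A - S. \<exists>xs. is_path E xs \<and> hd xs = x \<and> last xs = y \<and>
            real (length xs - 1) \<le> d \<and> set xs \<inter> S = {}))"

definition out_degree :: "('a \<times> 'a) set \<Rightarrow> 'a \<Rightarrow> nat" where
  "out_degree E x = card {y. (x, y) \<in> E}"

definition min_out_degree :: "'a set \<Rightarrow> ('a \<times> 'a) set \<Rightarrow> nat" where
  "min_out_degree V E = Min (out_degree E ` V)"

end

theory Submission imports Defs begin

text \<open>Let \<open>n = |V|\<close>. Call \<open>W \<subseteq> V\<close> nearly closed if every vertex of \<open>W\<close> has at most
\<open>c (n - |W|)\<close> out-neighbours outside \<open>W\<close>; \<open>V\<close> is nearly closed, so there is a smallest nearly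
closed set \<open>W\<close>. Fix \<open>S\<close> with \<open>|S| < k\<close> and \<open>x \<in> W - S\<close>, and grow the balls of radius
\<open>t \<le> L \<approx> 8/\<epsilon>\<^sup>2\<close> around \<open>x\<close> in \<open>W - S\<close>. Some layer adds at most \<open>n/L\<close> vertices; if that ball
missed \<open>\<epsilon>n/2\<close> vertices of \<open>W\<close>, it would itself be nearly closed (an edge leaves it only through
an exit of \<open>W\<close>, into \<open>S\<close>, or into the thin layer), contradicting minimality. So the
radius-\<open>L\<close> ball misses fewer than \<open>\<epsilon>n/2\<close> vertices of \<open>W\<close>, and every vertex with at least
\<open>\<epsilon>n/2\<close> in-neighbours in \<open>W\<close> is reached within \<open>L + 1\<close> steps. Inside \<open>W\<close> out-degrees are at
least \<open>\<delta>\<^sup>+ - cn\<close>, and double counting the edges of \<open>W\<close> yields at least \<open>\<delta>\<^sup>+ - cn - \<epsilon>n/2\<close>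
such vertices.\<close>

lemma is_path_take:
  assumes "is_path E xs" "i < length xs"
  shows "is_path E (take (Suc i) xs)"
  using assms unfolding is_path_def by auto

lemma is_path_snoc:
  assumes "is_path E xs" "(last xs, u) \<in> E" "u \<notin> set xs"
  shows "is_path E (xs @ [u])"
  unfolding is_path_def
proof (intro conjI allI impI)
  show "distinct (xs @ [u])" using assms(1,3) by (simp add: is_path_def)
  fix i assume i: "i + 1 < length (xs @ [u])"
  show "((xs @ [u]) ! i, (xs @ [u]) ! (i + 1)) \<in> E"
  proof (cases "i + 1 < length xs")
    case True
    then show ?thesis using assms(1) by (simp add: is_path_def nth_append)
  next
    case False
    then have "i = length xs - 1" using i by simp
    then show ?thesis using assms(1,2) by (simp add: is_path_def nth_append last_conv_nth)
  qed
qed simp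

definition path_ball :: "('a \<times> 'a) set \<Rightarrow> 'a set \<Rightarrow> 'a \<Rightarrow> nat \<Rightarrow> 'a set" where
  "path_ball E U x t =
     {v. \<exists>xs. is_path E xs \<and> hd xs = x \<and> last xs = v \<and> length xs \<le> t + 1 \<and> set xs \<subseteq> U}"

lemma path_ball_mono: "t \<le> t' \<Longrightarrow> path_ball E U x t \<subseteq> path_ball E U x t'"
  unfolding path_ball_def by fastforce

lemma path_ball_subset: "path_ball E U x t \<subseteq> U"
  unfolding path_ball_def by (auto simp: is_path_def)

lemma centre_in_path_ball: "x \<in> U \<Longrightarrow> x \<in> path_ball E U x t"
  unfolding path_ball_def by (rule CollectI, rule exI[of _ "[x]"]) (simp add: is_path_def)

lemma path_ball_Suc:
  assumes "v \<in> path_ball E U x t" "(v, u) \<in> E" "u \<in> U"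
  shows "u \<in> path_ball E U x (Suc t)"
proof -
  obtain xs where xs: "is_path E xs" "hd xs = x" "last xs = v" "length xs \<le> t + 1" "set xs \<subseteq> U"
    using assms(1) unfolding path_ball_def by blast
  have "xs \<noteq> []" using xs(1) by (simp add: is_path_def)
  show ?thesis
  proof (cases "u \<in> set xs")
    case True
    then obtain i where i: "i < length xs" "xs ! i = u" by (metis in_set_conv_nth)
    have "is_path E (take (Suc i) xs)" using is_path_take[OF xs(1) i(1)] .
    moreover have "set (take (Suc i) xs) \<subseteq> U" using xs(5) by (meson order.trans set_take_subset)
    moreover have "hd (take (Suc i) xs) = x" using xs(2) by (simp add: hd_take)
    moreover have "last (take (Suc i) xs) = u" using i by (simp add: take_Suc_conv_app_nth)
    ultimately show ?thesis
      using xs(4) unfolding path_ball_def by (intro CollectI exI[of _ "take (Suc i) xs"]) auto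
  next
    case False
    have "is_path E (xs @ [u])" using is_path_snoc[OF xs(1) _ False] xs(3) assms(2) by simp
    then show ?thesis
      using xs \<open>xs \<noteq> []\<close> assms(3) unfolding path_ball_def by (auto intro!: exI[of _ "xs @ [u]"])
  qed
qed

lemma exists_small_increment:
  fixes f :: "nat \<Rightarrow> real"
  assumes "L > 0" "f L - f 0 \<le> b"
  shows "\<exists>t<L. f (Suc t) - f t \<le> b / L"
proof (rule ccontr)
  assume "\<not> ?thesis"
  then have "(\<Sum>t<L. b / L) < (\<Sum>t<L. f (Suc t) - f t)"
    using assms(1) by (intro sum_strict_mono) auto
  then show False using assms by (simp add: sum_lessThan_telescope)
qed

lemma of_nat_card_Diff_subset:
  assumes "finite A" "B \<subseteq> A"
  shows "real (card (A - B)) = real (card A) - real (card B)"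
  using assms by (simp add: card_Diff_subset card_mono of_nat_diff finite_subset)

definition nearly_closed :: "'a set \<Rightarrow> ('a \<times> 'a) set \<Rightarrow> real \<Rightarrow> 'a set \<Rightarrow> bool" where
  "nearly_closed V E c W \<longleftrightarrow> W \<subseteq> V \<and> W \<noteq> {} \<and>
     (\<forall>w\<in>W. real (card (E `` {w} - W)) \<le> c * (real (card V) - real (card W)))"

lemma nearly_closed_whole:
  assumes "V \<noteq> {}" "E \<subseteq> V \<times> V"
  shows "nearly_closed V E c V"
proof -
  have "card (E `` {w} - V) = 0" for w
    using Image_subset[OF assms(2)] by (metis Diff_eq_empty_iff card.empty)
  then show ?thesis unfolding nearly_closed_def using assms(1) by simp
qed

lemma path_ball_nearly_closed:
  assumes G: "digraph V E" and W: "nearly_closed V E c W"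
    and S: "finite S" "card S \<le> k" and x: "x \<in> W - S"
    and thin: "real (card (path_ball E (W - S) x (Suc t))) - real (card (path_ball E (W - S) x t)) \<le> m"
    and gap: "real k + m \<le> c * (real (card W) - real (card (path_ball E (W - S) x t)))"
  shows "nearly_closed V E c (path_ball E (W - S) x t)"
  unfolding nearly_closed_def
proof (intro conjI ballI)
  let ?B = "path_ball E (W - S) x"
  have finV: "finite V" and EV: "E \<subseteq> V \<times> V" using G by (auto simp: digraph_def)
  have WV: "W \<subseteq> V"
    and W_closed: "\<And>w. w \<in> W \<Longrightarrow> real (card (E `` {w} - W)) \<le> c * (real (card V) - real (card W))"
    using W unfolding nearly_closed_def by auto
  have BW: "?B s \<subseteq> W" for s using path_ball_subset[of E "W - S" x s] by blast
  have finB: "finite (?B s)" for s using BW WV finV by (metis finite_subset)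
  show "?B t \<subseteq> V" using BW WV by blast
  show "?B t \<noteq> {}" using centre_in_path_ball[OF x] by blast
  fix r assume r: "r \<in> ?B t"
  have "finite (E `` {r})" using Image_subset[OF EV] finV by (rule finite_subset)
  moreover have "E `` {r} - ?B t \<subseteq> (E `` {r} - W) \<union> S \<union> (?B (Suc t) - ?B t)"
    using path_ball_Suc[OF r] by blast
  ultimately have "card (E `` {r} - ?B t) \<le> card ((E `` {r} - W) \<union> S \<union> (?B (Suc t) - ?B t))"
    using S(1) finB by (intro card_mono) auto
  also have "\<dots> \<le> card (E `` {r} - W) + card S + card (?B (Suc t) - ?B t)"
    by (meson add_le_mono card_Un_le le_refl order_trans)
  finally have "card (E `` {r} - ?B t) \<le> card (E `` {r} - W) + card S + card (?B (Suc t) - ?B t)" .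
  moreover have "real (card (?B (Suc t) - ?B t)) = real (card (?B (Suc t))) - real (card (?B t))"
    using finB path_ball_mono[of t "Suc t" E "W - S" x] by (intro of_nat_card_Diff_subset) auto
  ultimately have bound: "real (card (E `` {r} - ?B t))
      \<le> real (card (E `` {r} - W)) + real k + (real (card (?B (Suc t))) - real (card (?B t)))"
    using S(2) by linarith
  have "real (card (E `` {r} - W)) \<le> c * (real (card V) - real (card W))"
    using W_closed r BW by blast
  moreover have "c * (real (card V) - real (card W)) + c * (real (card W) - real (card (?B t)))
      = c * (real (card V) - real (card (?B t)))"
    by (simp add: algebra_simps)
  ultimately show "real (card (E `` {r} - ?B t)) \<le> c * (real (card V) - real (card (?B t)))"
    using bound thin gap by linarith
qed

lemma path_ball_almost_covers_minimal:
  assumes G: "digraph V E" and W: "nearly_closed V E c W"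
    and W_min: "\<And>W'. nearly_closed V E c W' \<Longrightarrow> card W \<le> card W'"
    and "c \<ge> 0" "L > 0" "g > 0" and gap: "real k + real (card V) / real L \<le> c * g"
    and S: "finite S" "card S \<le> k" and x: "x \<in> W - S"
  shows "real (card (W - path_ball E (W - S) x L)) < g"
proof -
  let ?B = "path_ball E (W - S) x"
  have finV: "finite V" using G by (simp add: digraph_def)
  have WV: "W \<subseteq> V" using W by (simp add: nearly_closed_def)
  have BW: "?B s \<subseteq> W" for s using path_ball_subset[of E "W - S" x s] by blast
  have finW: "finite W" using WV finV by (rule finite_subset)
  have card_B: "card (?B s) \<le> card V" for s
    using BW WV finV by (meson card_mono order.trans)
  obtain t where t: "t < L" "real (card (?B (Suc t))) - real (card (?B t)) \<le> real (card V) / real L"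
    using exists_small_increment[of L "\<lambda>s. real (card (?B s))" "real (card V)"] \<open>L > 0\<close> card_B[of L]
    by auto
  have card_W_diff: "real (card (W - ?B s)) = real (card W) - real (card (?B s))" for s
    using finW BW by (rule of_nat_card_Diff_subset)
  have "real (card (W - ?B t)) < g"
  proof (rule ccontr)
    assume large: "\<not> real (card (W - ?B t)) < g"
    then have "c * g \<le> c * (real (card W) - real (card (?B t)))"
      using card_W_diff[of t] \<open>c \<ge> 0\<close> by (simp add: mult_left_mono)
    then have "nearly_closed V E c (?B t)"
      using path_ball_nearly_closed[OF G W S x t(2)] gap by linarith
    then have "card W \<le> card (?B t)" by (rule W_min)
    then show False using large card_W_diff[of t] \<open>g > 0\<close> by linarith
  qed
  moreover have "card (W - ?B L) \<le> card (W - ?B t)"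
    using finW path_ball_mono[of t L E "W - S" x] t(1) by (intro card_mono) auto
  ultimately show ?thesis by linarith
qed

lemma kd_connected_high_in_degree:
  assumes covers: "\<And>S x. S \<subseteq> V \<Longrightarrow> card S + 1 \<le> k \<Longrightarrow> x \<in> W - S \<Longrightarrow>
      real (card (W - path_ball E (W - S) x L)) < g"
    and "finite W"
  shows "kd_connected V E k (real L + 1) {y\<in>W. g \<le> real (card {z\<in>W. (z, y) \<in> E})}"
  unfolding kd_connected_def
proof (intro allI impI ballI)
  let ?A = "{y\<in>W. g \<le> real (card {z\<in>W. (z, y) \<in> E})}"
  fix S x y assume S: "S \<subseteq> V" "card S + 1 \<le> k" and x: "x \<in> ?A - S" and y: "y \<in> ?A - S"
  let ?B = "path_ball E (W - S) x L"
  have "\<not> {z\<in>W. (z, y) \<in> E} \<subseteq> W - ?B"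
  proof
    assume "{z\<in>W. (z, y) \<in> E} \<subseteq> W - ?B"
    then have "card {z\<in>W. (z, y) \<in> E} \<le> card (W - ?B)" using \<open>finite W\<close> by (intro card_mono) auto
    then show False using covers[OF S] x y by fastforce
  qed
  then obtain z where "z \<in> ?B" "(z, y) \<in> E" by blast
  then have "y \<in> path_ball E (W - S) x (Suc L)" using y by (intro path_ball_Suc) auto
  then obtain xs where "is_path E xs" "hd xs = x" "last xs = y" "length xs \<le> L + 2" "set xs \<subseteq> W - S"
    unfolding path_ball_def by auto
  then show "\<exists>xs. is_path E xs \<and> hd xs = x \<and> last xs = y \<and> real (length xs - 1) \<le> real L + 1 \<and> set xs \<inter> S = {}"
    by (intro exI[of _ xs]) auto
qed

lemma kd_connected_mono:
  "kd_connected V E k d A \<Longrightarrow> d \<le> d' \<Longrightarrow> kd_connected V E k d' A"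
  unfolding kd_connected_def by (meson order.trans)

lemma sum_in_degrees_eq_sum_out_degrees:
  assumes "finite W"
  shows "(\<Sum>y\<in>W. card {z\<in>W. (z, y) \<in> E}) = (\<Sum>z\<in>W. card {y\<in>W. (z, y) \<in> E})"
proof -
  have card_eq: "card {z\<in>W. P z} = (\<Sum>z\<in>W. if P z then 1 else 0)" for P
    using assms by (simp add: sum.If_cases Int_def)
  show ?thesis
    unfolding card_eq by (rule sum.swap)
qed

lemma card_high_in_degree_ge:
  fixes D g :: real
  assumes "finite W" "W \<noteq> {}" "g \<ge> 0"
    and out: "\<And>z. z \<in> W \<Longrightarrow> D \<le> real (card {y\<in>W. (z, y) \<in> E})"
  shows "D - g \<le> real (card {y\<in>W. g \<le> real (card {z\<in>W. (z, y) \<in> E})})"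
proof -
  let ?A = "{y\<in>W. g \<le> real (card {z\<in>W. (z, y) \<in> E})}"
  have in_bound: "real (card {z\<in>W. (z, y) \<in> E}) \<le> (if y \<in> ?A then real (card W) else 0) + g"
    if "y \<in> W" for y
    using that \<open>finite W\<close> \<open>g \<ge> 0\<close> card_mono[of W "{z\<in>W. (z, y) \<in> E}"] by auto
  have "real (card W) * D \<le> (\<Sum>z\<in>W. real (card {y\<in>W. (z, y) \<in> E}))"
    using sum_mono[OF out] by simp
  also have "\<dots> = (\<Sum>y\<in>W. real (card {z\<in>W. (z, y) \<in> E}))"
    using arg_cong[where f = real, OF sum_in_degrees_eq_sum_out_degrees[OF \<open>finite W\<close>, of E]]
    by simp
  also have "\<dots> \<le> (\<Sum>y\<in>W. (if y \<in> ?A then real (card W) else 0) + g)"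
    using in_bound by (rule sum_mono)
  also have "\<dots> = real (card W) * (real (card ?A) + g)"
    using \<open>finite W\<close> by (simp add: sum.distrib sum.If_cases Int_def algebra_simps)
  finally show ?thesis
    using \<open>finite W\<close> \<open>W \<noteq> {}\<close> by (simp add: card_gt_0_iff)
qed

lemma min_out_degree_le_out_degree:
  assumes "digraph V E" "w \<in> V"
  shows "min_out_degree V E \<le> card (E `` {w})"
  using assms unfolding digraph_def min_out_degree_def out_degree_def by (simp add: Image_singleton)

lemma min_out_degree_le_card:
  assumes "digraph V E" "V \<noteq> {}"
  shows "min_out_degree V E \<le> card V"
proof -
  obtain w where "w \<in> V" using assms(2) by blast
  moreover have "card (E `` {w}) \<le> card V"
    using assms(1) unfolding digraph_def by (metis Image_subset card_mono)
  ultimately show ?thesis using min_out_degree_le_out_degree[OF assms(1)] le_trans by blast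
qed

lemma out_degree_within_nearly_closed:
  assumes G: "digraph V E" and W: "nearly_closed V E c W" and "c \<ge> 0" "w \<in> W"
  shows "real (min_out_degree V E) - c * real (card V) \<le> real (card {y\<in>W. (w, y) \<in> E})"
proof -
  have WV: "W \<subseteq> V" using W by (simp add: nearly_closed_def)
  have "E `` {w} = {y\<in>W. (w, y) \<in> E} \<union> (E `` {w} - W)" by auto
  then have "card (E `` {w}) \<le> card {y\<in>W. (w, y) \<in> E} + card (E `` {w} - W)"
    by (metis card_Un_le)
  moreover have "min_out_degree V E \<le> card (E `` {w})"
    using min_out_degree_le_out_degree[OF G] WV \<open>w \<in> W\<close> by blast
  moreover have "real (card (E `` {w} - W)) \<le> c * (real (card V) - real (card W))"
    using W \<open>w \<in> W\<close> by (simp add: nearly_closed_def)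
  moreover have "c * (real (card V) - real (card W)) \<le> c * real (card V)"
    using \<open>c \<ge> 0\<close> by (simp add: mult_left_mono)
  ultimately show ?thesis by linarith
qed

lemma exists_large_kd_connected_set:
  assumes G: "digraph V E" and "V \<noteq> {}" "c \<ge> 0" "L > 0" "g > 0"
    and gap: "real k + real (card V) / real L \<le> c * g"
  shows "\<exists>A\<subseteq>V. kd_connected V E k (real L + 1) A \<and>
           real (min_out_degree V E) - c * real (card V) - g \<le> real (card A)"
proof -
  have finV: "finite V" and EV: "E \<subseteq> V \<times> V" using G by (auto simp: digraph_def)
  obtain W where W: "nearly_closed V E c W"
    and W_min: "\<And>W'. nearly_closed V E c W' \<Longrightarrow> card W \<le> card W'"
    using ex_has_least_nat[of "nearly_closed V E c" V card] nearly_closed_whole[OF \<open>V \<noteq> {}\<close> EV]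
    by blast
  have WV: "W \<subseteq> V" and "W \<noteq> {}" using W by (auto simp: nearly_closed_def)
  have finW: "finite W" using WV finV by (rule finite_subset)
  define A where "A = {y\<in>W. g \<le> real (card {z\<in>W. (z, y) \<in> E})}"
  have "kd_connected V E k (real L + 1) A"
    unfolding A_def
  proof (rule kd_connected_high_in_degree[OF _ finW])
    fix S x assume "S \<subseteq> V" "card S + 1 \<le> k" "x \<in> W - S"
    then show "real (card (W - path_ball E (W - S) x L)) < g"
      using path_ball_almost_covers_minimal[OF G W W_min \<open>c \<ge> 0\<close> \<open>L > 0\<close> \<open>g > 0\<close> gap]
        finite_subset[OF _ finV] by simp
  qed
  moreover have "real (min_out_degree V E) - c * real (card V) - g \<le> real (card A)"
    unfolding A_def using finW \<open>W \<noteq> {}\<close> \<open>g > 0\<close>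
    by (intro card_high_in_degree_ge out_degree_within_nearly_closed[OF G W \<open>c \<ge> 0\<close>]) auto
  moreover have "A \<subseteq> V" using WV by (auto simp: A_def)
  ultimately show ?thesis by blast
qed

lemma parameter_bounds:
  fixes \<epsilon> n :: real
  assumes "0 < \<epsilon>" "\<epsilon> < 1" "32 * real k / \<epsilon>\<^sup>2 \<le> n"
  defines "L \<equiv> nat \<lceil>8 / \<epsilon>\<^sup>2\<rceil>"
  shows "0 < L" and "real L + 1 \<le> 40 / \<epsilon>\<^sup>2" and "2 * (real k + n / real L) / \<epsilon> \<le> \<epsilon> * n / 2"
proof -
  have e2: "0 < \<epsilon>\<^sup>2" "\<epsilon>\<^sup>2 < 1" using assms(1,2) by (simp_all add: power_less_one_iff)
  have "real L = of_int \<lceil>8 / \<epsilon>\<^sup>2\<rceil>"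
    unfolding L_def using e2(1) by (simp add: order.strict_implies_order)
  then have L_ge: "8 / \<epsilon>\<^sup>2 \<le> real L" and L_lt: "real L < 8 / \<epsilon>\<^sup>2 + 1"
    by linarith+
  have L_pos: "0 < real L" using L_ge e2(1) by (smt (verit) divide_pos_pos)
  then show "0 < L" by simp
  have "2 \<le> 32 / \<epsilon>\<^sup>2" using e2 by (simp add: field_simps)
  moreover have "40 / \<epsilon>\<^sup>2 = 8 / \<epsilon>\<^sup>2 + 32 / \<epsilon>\<^sup>2" by (simp add: add_divide_distrib[symmetric])
  ultimately show "real L + 1 \<le> 40 / \<epsilon>\<^sup>2" using L_lt by linarith
  have "n \<ge> 0" using assms(3) e2(1) by (smt (verit) divide_nonneg_pos of_nat_0_le_iff)
  then have "n / real L \<le> n / (8 / \<epsilon>\<^sup>2)"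
    using L_ge L_pos e2(1) by (intro divide_left_mono) auto
  moreover have "real k \<le> n * \<epsilon>\<^sup>2 / 32" using assms(3) e2(1) by (simp add: field_simps)
  ultimately have "2 * (real k + n / real L) / \<epsilon> \<le> 2 * (n * \<epsilon>\<^sup>2 / 32 + n * \<epsilon>\<^sup>2 / 8) / \<epsilon>"
    using assms(1) by (intro divide_right_mono) auto
  also have "\<dots> = 5 / 16 * (\<epsilon> * n)" using assms(1) by (simp add: field_simps power2_eq_square)
  also have "\<dots> \<le> \<epsilon> * n / 2" using \<open>n \<ge> 0\<close> assms(1) by simp
  finally show "2 * (real k + n / real L) / \<epsilon> \<le> \<epsilon> * n / 2" .
qed

theorem mainTheorem6:
  fixes \<epsilon> :: real and k :: nat and V :: "'a set" and E :: "('a \<times> 'a) set"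
  assumes "\<epsilon> > 0"
    and "digraph V E"
    and "V \<noteq> {}"
    and "real (card V) \<ge> 32 * real k / \<epsilon>\<^sup>2"
  shows "\<exists>A \<subseteq> V. kd_connected V E k (40 / \<epsilon>\<^sup>2) A \<and>
           real (card A) \<ge> real (min_out_degree V E) - \<epsilon> * real (card V)"
proof (cases "\<epsilon> \<ge> 1")
  case True
  have "real (min_out_degree V E) \<le> \<epsilon> * real (card V)"
    using min_out_degree_le_card[OF assms(2,3)] True mult_right_mono[of 1 \<epsilon> "real (card V)"] by simp
  moreover have "kd_connected V E k (40 / \<epsilon>\<^sup>2) {}" by (simp add: kd_connected_def)
  ultimately show ?thesis by force
next
  case False
  define n L where "n = real (card V)" and "L = nat \<lceil>8 / \<epsilon>\<^sup>2\<rceil>"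
  define g c where "g = \<epsilon> * n / 2" and "c = (real k + n / real L) / g"
  have L: "0 < L" "real L + 1 \<le> 40 / \<epsilon>\<^sup>2" and cn: "2 * (real k + n / real L) / \<epsilon> \<le> \<epsilon> * n / 2"
    using parameter_bounds[of \<epsilon> k n] assms(1,4) False unfolding L_def n_def by auto
  have "n > 0" using assms(2,3) by (simp add: n_def digraph_def card_gt_0_iff)
  then have "g > 0" using assms(1) by (simp add: g_def)
  then have "c \<ge> 0" "c * g = real k + n / real L" using \<open>n > 0\<close> by (simp_all add: c_def)
  then obtain A where A: "A \<subseteq> V" "kd_connected V E k (real L + 1) A"
      "real (min_out_degree V E) - c * n - g \<le> real (card A)"
    using exists_large_kd_connected_set[OF assms(2,3) _ L(1) \<open>g > 0\<close>, of c k] unfolding n_def by auto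
  moreover have "c * n = 2 * (real k + n / real L) / \<epsilon>"
    using \<open>n > 0\<close> assms(1) by (simp add: c_def g_def)
  ultimately have "real (min_out_degree V E) - \<epsilon> * n \<le> real (card A)"
    using cn g_def by linarith
  then show ?thesis using A(1) kd_connected_mono[OF A(2) L(2)] unfolding n_def by blast
qed

end
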